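(* Let $K\subset\mathbb{R}^n$ and $C\subset\mathbb{R}^m$ be nonempty, convex, closed and bounded sets, and let $f,h:\mathbb{R}^n\times\mathbb{R}^m\to\mathbb{R}$ be continuous functions such that, for every $y\in K$, $f(y,\cdot)$ and $h(y,\cdot)$ are convex, and such that $f$ takes only positive values. Let $\varepsilon>0$, let $y_\varepsilon$ be an optimal solution of $(\mathcal{P}_\varepsilon)$, let $y^*$ be an optimal solution of $(\widetilde{\mathcal{P}})$, let $x^*\in\mathcal{S}(y^* )$, and let $\tilde x_\varepsilon\in\mathcal{S}_\varepsilon(y^* )$. Then for every $x_\varepsilon\in\mathcal{S}_\varepsilon(y_\varepsilon)$, $$f(y^*,\tilde x_\varepsilon)\le f(y_\varepsilon,x_\varepsilon)\le f(y^*,x^* ).$$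
   Context: $f^2=(f)^2$. For $y\in K$: $\mathcal{S}(y)=\operatorname{argmin}\{h(y,z)\mid z\in C\}$; for $\varepsilon>0$, $\mathcal{S}_\varepsilon(y)=\operatorname{argmin}\{h(y,z)+\varepsilon f^2(y,z)\mid z\in C\}$; $\widetilde{\mathcal{S}}(y)=\operatorname{argmin}\{f^2(y,z)\mid z\in\mathcal{S}(y)\}$. $(\mathcal{P}_\varepsilon)$: maximize $f(y,x)$ over $y\in K$, $x\in\mathcal{S}_\varepsilon(y)$; $y_\varepsilon\in K$ is optimal if $f(y_\varepsilon,x')\ge f(y,x)$ for all $x'\in\mathcal{S}_\varepsilon(y_\varepsilon)$, $y\in K$, $x\in\mathcal{S}_\varepsilon(y)$. $(\widetilde{\mathcal{P}})$: maximize $f(y,x)$ over $y\in K$, $x\in\widetilde{\mathcal{S}}(y)$; $y^*\in K$ is optimal if $f(y^*,x')\ge f(y,x)$ for all $x'\in\widetilde{\mathcal{S}}(y^* )$, $y\in K$, $x\in\widetilde{\mathcal{S}}(y)$. *)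

theory Defs
  imports "HOL-Analysis.Analysis"
begin

definition argmin_set :: "('x \<Rightarrow> real) \<Rightarrow> 'x set \<Rightarrow> 'x set" where
  "argmin_set g A = {z \<in> A. \<forall>z'\<in>A. g z \<le> g z'}"

definition Ssol :: "('y \<Rightarrow> 'x \<Rightarrow> real) \<Rightarrow> 'x set \<Rightarrow> 'y \<Rightarrow> 'x set" where
  "Ssol h C y = argmin_set (h y) C"

definition Seps :: "('y \<Rightarrow> 'x \<Rightarrow> real) \<Rightarrow> ('y \<Rightarrow> 'x \<Rightarrow> real) \<Rightarrow> 'x set \<Rightarrow> real \<Rightarrow> 'y \<Rightarrow> 'x set" where
  "Seps f h C \<epsilon> y = argmin_set (\<lambda>z. h y z + \<epsilon> * (f y z)^2) C"

definition Stilde :: "('y \<Rightarrow> 'x \<Rightarrow> real) \<Rightarrow> ('y \<Rightarrow> 'x \<Rightarrow> real) \<Rightarrow> 'x set \<Rightarrow> 'y \<Rightarrow> 'x set" where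
  "Stilde f h C y = argmin_set (\<lambda>z. (f y z)^2) (Ssol h C y)"

text \<open>Optimality of y for the problem max f(y,x), y in K, x in Sm(y) (pessimistic-style
  definition as in the paper).\<close>
definition optimal_for :: "('y \<Rightarrow> 'x \<Rightarrow> real) \<Rightarrow> 'y set \<Rightarrow> ('y \<Rightarrow> 'x set) \<Rightarrow> 'y \<Rightarrow> bool" where
  "optimal_for f K Sm y0 \<longleftrightarrow> y0 \<in> K \<and>
     (\<forall>x'\<in>Sm y0. \<forall>y\<in>K. \<forall>x\<in>Sm y. f y0 x' \<ge> f y x)"

end

theory Submission
  imports Defs
begin

text \<open>Fix \<open>y\<close> and take \<open>x \<in> Seps f h C \<epsilon> y\<close> and \<open>x' \<in> Stilde f h C y\<close>. Since \<open>x'\<close>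
  minimises \<open>h y\<close> on \<open>C\<close>, the penalised optimality of \<open>x\<close> against \<open>x'\<close> leaves only
  \<open>\<epsilon> (f y x)\<^sup>2 \<le> \<epsilon> (f y x')\<^sup>2\<close>, so \<open>f y x \<le> f y x'\<close>; likewise \<open>f y x' \<le> f y z\<close> for
  every \<open>z \<in> Ssol h C y\<close>. Chaining these comparisons with the optimality of \<open>y\<epsilon>\<close> and
  \<open>ystar\<close> gives both inequalities. Compactness of \<open>C\<close> and continuity make \<open>Stilde f h C y\<close>
  nonempty.\<close>

lemma argmin_setD:
  assumes "z \<in> argmin_set g A"
  shows "z \<in> A" and "z' \<in> A \<Longrightarrow> g z \<le> g z'"
  using assms unfolding argmin_set_def by auto

lemma argmin_set_nonempty:
  fixes g :: "'a::topological_space \<Rightarrow> real"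
  assumes "compact A" "A \<noteq> {}" "continuous_on A g"
  shows "argmin_set g A \<noteq> {}"
  using continuous_attains_inf[OF assms] unfolding argmin_set_def by auto

lemma compact_argmin_set:
  fixes g :: "'a::t2_space \<Rightarrow> real"
  assumes "compact A" "continuous_on A g"
  shows "compact (argmin_set g A)"
proof (cases "A = {}")
  case True
  then show ?thesis by (simp add: argmin_set_def)
next
  case False
  then obtain z0 where z0: "z0 \<in> argmin_set g A"
    using argmin_set_nonempty[OF assms(1) _ assms(2)] by blast
  then have "argmin_set g A = A \<inter> g -` {..g z0}"
    unfolding argmin_set_def by (auto intro: order_trans)
  moreover have "closed (A \<inter> g -` {..g z0})"
    using continuous_closed_preimage[OF assms(2) compact_imp_closed[OF assms(1)]] by simp
  ultimately show ?thesis
    using compact_Int_closed[OF assms(1)] by (metis Int_absorb inf.assoc)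
qed

lemma continuous_on_slice:
  assumes "continuous_on UNIV (\<lambda>(y, x). g y x)"
  shows "continuous_on A (g y)"
  using continuous_on_compose2[OF assms, of A "Pair y"]
  by (simp add: continuous_on_Pair)

lemma Stilde_nonempty:
  fixes f h :: "'y::topological_space \<Rightarrow> 'x::t2_space \<Rightarrow> real"
  assumes "compact C" "C \<noteq> {}"
    and "continuous_on UNIV (\<lambda>(y, x). f y x)" "continuous_on UNIV (\<lambda>(y, x). h y x)"
  shows "Stilde f h C y \<noteq> {}"
proof -
  have h_cont: "continuous_on C (h y)"
    using assms(4) by (rule continuous_on_slice)
  have "compact (Ssol h C y)" "Ssol h C y \<noteq> {}"
    unfolding Ssol_def
    using compact_argmin_set[OF assms(1) h_cont] argmin_set_nonempty[OF assms(1,2) h_cont]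
    by auto
  moreover have "continuous_on (Ssol h C y) (\<lambda>z. (f y z)\<^sup>2)"
    using continuous_on_slice[OF assms(3)] by (auto intro: continuous_intros)
  ultimately show ?thesis
    unfolding Stilde_def by (rule argmin_set_nonempty)
qed

lemma Stilde_le_Ssol:
  assumes "x' \<in> Stilde f h C y" "z \<in> Ssol h C y" "0 \<le> f y z"
  shows "f y x' \<le> f y z"
  using assms power2_le_imp_le unfolding Stilde_def argmin_set_def by blast

lemma Seps_le_Stilde:
  assumes "x \<in> Seps f h C \<epsilon> y" "x' \<in> Stilde f h C y" "\<epsilon> > 0" "0 \<le> f y x'"
  shows "f y x \<le> f y x'"
proof -
  have x'_Ssol: "x' \<in> Ssol h C y"
    using assms(2) unfolding Stilde_def by (rule argmin_setD)
  then have "x' \<in> C"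
    unfolding Ssol_def by (rule argmin_setD)
  with assms(1) have "h y x + \<epsilon> * (f y x)\<^sup>2 \<le> h y x' + \<epsilon> * (f y x')\<^sup>2"
    unfolding Seps_def by (rule argmin_setD)
  moreover have "h y x' \<le> h y x"
    using x'_Ssol argmin_setD(1)[OF assms(1)[unfolded Seps_def]]
    unfolding Ssol_def by (rule argmin_setD)
  ultimately have "\<epsilon> * (f y x)\<^sup>2 \<le> \<epsilon> * (f y x')\<^sup>2"
    by linarith
  then have "(f y x)\<^sup>2 \<le> (f y x')\<^sup>2"
    using assms(3) by simp
  then show ?thesis
    using assms(4) by (rule power2_le_imp_le)
qed

lemma optimal_forD:
  assumes "optimal_for f K Sm y0" "x' \<in> Sm y0" "y \<in> K" "x \<in> Sm y"
  shows "f y x \<le> f y0 x'"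
  using assms unfolding optimal_for_def by blast

theorem lemma4p3:
  fixes K :: "(real^'n) set" and C :: "(real^'m) set"
    and f h :: "real^'n \<Rightarrow> real^'m \<Rightarrow> real"
    and \<epsilon> :: real and y\<epsilon> ystar :: "real^'n" and xstar x\<epsilon>t :: "real^'m"
  assumes "K \<noteq> {}" "convex K" "closed K" "bounded K"
    and "C \<noteq> {}" "convex C" "closed C" "bounded C"
    and "continuous_on UNIV (\<lambda>(y, x). f y x)"
    and "continuous_on UNIV (\<lambda>(y, x). h y x)"
    and "\<forall>y\<in>K. convex_on UNIV (f y)"
    and "\<forall>y\<in>K. convex_on UNIV (h y)"
    and "\<forall>y x. f y x > 0"
    and "\<epsilon> > 0"
    and "optimal_for f K (Seps f h C \<epsilon>) y\<epsilon>"
    and "optimal_for f K (Stilde f h C) ystar"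
    and "xstar \<in> Ssol h C ystar"
    and "x\<epsilon>t \<in> Seps f h C \<epsilon> ystar"
  shows "\<forall>x\<epsilon> \<in> Seps f h C \<epsilon> y\<epsilon>.
           f ystar x\<epsilon>t \<le> f y\<epsilon> x\<epsilon> \<and> f y\<epsilon> x\<epsilon> \<le> f ystar xstar"
proof
  fix x\<epsilon> assume x\<epsilon>: "x\<epsilon> \<in> Seps f h C \<epsilon> y\<epsilon>"
  have "y\<epsilon> \<in> K" "ystar \<in> K"
    using assms(15,16) unfolding optimal_for_def by auto
  have f_nonneg: "0 \<le> f y x" for y x
    using assms(13) by (simp add: less_imp_le)
  have "compact C"
    using assms(7,8) by (simp add: compact_eq_bounded_closed)
  then have Stilde_ne: "Stilde f h C y \<noteq> {}" for y
    using Stilde_nonempty assms(5,9,10) by blast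
  obtain x' where x': "x' \<in> Stilde f h C y\<epsilon>"
    using Stilde_ne by blast
  obtain x'' where x'': "x'' \<in> Stilde f h C ystar"
    using Stilde_ne by blast
  have "f ystar x\<epsilon>t \<le> f y\<epsilon> x\<epsilon>"
    using optimal_forD[OF assms(15) x\<epsilon> \<open>ystar \<in> K\<close> assms(18)] .
  moreover have "f y\<epsilon> x\<epsilon> \<le> f y\<epsilon> x'"
    using Seps_le_Stilde[OF x\<epsilon> x' assms(14) f_nonneg] .
  moreover have "f y\<epsilon> x' \<le> f ystar x''"
    using optimal_forD[OF assms(16) x'' \<open>y\<epsilon> \<in> K\<close> x'] .
  moreover have "f ystar x'' \<le> f ystar xstar"
    using Stilde_le_Ssol[OF x'' assms(17) f_nonneg] .
  ultimately show "f ystar x\<epsilon>t \<le> f y\<epsilon> x\<epsilon> \<and> f y\<epsilon> x\<epsilon> \<le> f ystar xstar"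
    by linarith
qed

end
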